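(* Let $\widetilde{\Sigma}_1,\ldots,\widetilde{\Sigma}_n$ be pairwise disjoint visibly pushdown alphabets and $P_k\subseteq\widetilde{\Sigma}_k^*$ well-matched visibly pushdown languages, each equipped with a semantics $\mathcal{F}_k$ as described in the context, and let $\mathcal{M}$ (the $n$-stack semantics) and $\mathcal{S}$ (the single-stack semantics) be defined from them as in the context. Then for every word $\rho\in P_1\bowtie\cdots\bowtie P_n$ and all assertions $A,B$ over the valuations in $V$, the Hoare triple $\{A\}\rho\{B\}$ is valid with respect to $\mathcal{M}$ if and only if it is valid with respect to $\mathcal{S}$.
   Context: A visibly pushdown (VP) alphabet is a finite alphabet partitioned into calls, returns and internals; $\Sigma^{\mathsf{call}}_k,\Sigma^{\mathsf{ret}}_k,\Sigma^{\mathsf{int}}_k$ are those of $\widetilde{\Sigma}_k$, and $\widetilde{\Sigma}=\biguplus_k\widetilde{\Sigma}_k$. Calls and returns are matched like parentheses (internals ignored); well-matched = all matched. Shuffle $P_1\parallel\cdots\parallel P_n=\{w\in\widetilde{\Sigma}^*:\Pi_{\widetilde{\Sigma}_k}(w)\in P_k\ \forall k\}$; a word is well-nested if every matched call–return pair consists of letters from the same $\widetilde{\Sigma}_k$; $P_1\bowtie\cdots\bowtie P_n$ is the set of well-nested words of the shuffle. Program $k$ has its own variables (disjoint across programs); $V_k$ is its set of valuations, and $V$ is the set of valuations of all variables, identified with tuples $\nu=(\nu|_1,\ldots,\nu|_n)$, $\nu|_j\in V_j$. A stack is a nonempty finite sequence of frames; $S.\nu$ denotes a stack with top frame $\nu$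 and rest $S$. Semantics $\mathcal{F}_k$: for $c\in\Sigma^{\mathsf{call}}_k$, $\mathcal{F}_k(c):V_k\to 2^{V_k}$; for $r\in\Sigma^{\mathsf{ret}}_k$, $\mathcal{F}_k(r):V_k\times V_k\to 2^{V_k}$; for $a\in\Sigma^{\mathsf{int}}_k$, $\mathcal{F}_k(a):V_k\to 2^{V_k}$. $n$-stack semantics: for $x\in\widetilde{\Sigma}_k$, $\mathcal{M}(x)$ relates tuples $(S_1,\ldots,S_n)$ of stacks ($S_j$ over $V_j$) leaving components $j\ne k$ unchanged and changing the $k$-th as: call $x$: $S.\nu\mapsto S.\nu.\nu'$ with $\nu'\in\mathcal{F}_k(x)(\nu)$; return $x$: $S.\nu_<.\nu\mapsto S.\nu'$ with $\nu'\in\mathcal{F}_k(x)(\nu,\nu_<)$; internal $x$: $S.\nu\mapsto S.\nu'$ with $\nu'\in\mathcal{F}_k(x)(\nu)$. Single-stack semantics on stacks over $V$: for $x\in\widetilde{\Sigma}_k$, call: $S.\nu\mapsto S.\nu.\nu'$ with $\nu'|_k\in\mathcal{F}_k(x)(\nu|_k)$, $\nu'|_j=\nu|_j$ ($j\ne k$); return: $S.\nu_<.\nu\mapsto S.\nu'$ with $\nu'|_k\in\mathcal{F}_k(x)(\nu|_k,\nu_<|_k)$, $\nu'|_j=\nu|_j$ ($j\ne k$); internal: $S.\nu\mapsto S.\nu'$ with $\nu'|_k\in\mathcal{F}_k(x)(\nu|_k)$, $\nu'|_j=\nu|_j$ ($j\ne k$). Both are extended to words by relational composition. $\{A\}\rho\{B\}$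 is valid w.r.t. $\mathcal{M}$ if for all $((S_1.\nu_1,\ldots,S_n.\nu_n),(S_1'.\nu_1',\ldots,S_n'.\nu_n'))\in\mathcal{M}(\rho)$, $(\nu_1,\ldots,\nu_n)\models A$ implies $(\nu'_1,\ldots,\nu'_n)\models B$; valid w.r.t. $\mathcal{S}$ if for all $(S.\nu,S'.\nu')\in\mathcal{S}(\rho)$, $\nu\models A$ implies $\nu'\models B$. *)

theory Defs
  imports Main
begin

text \<open>Programs are indexed by k < n (0-based). The VP alphabet of program k is
  Sig Cal Ret Itn k = Cal k \<union> Ret k \<union> Itn k (calls, returns, internals).\<close>

definition Sig :: "(nat \<Rightarrow> 'a set) \<Rightarrow> (nat \<Rightarrow> 'a set) \<Rightarrow> (nat \<Rightarrow> 'a set) \<Rightarrow> nat \<Rightarrow> 'a set" where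
  "Sig Cal Ret Itn k = Cal k \<union> Ret k \<union> Itn k"

definition vp_alphabets :: "nat \<Rightarrow> (nat \<Rightarrow> 'a set) \<Rightarrow> (nat \<Rightarrow> 'a set) \<Rightarrow> (nat \<Rightarrow> 'a set) \<Rightarrow> bool" where
  "vp_alphabets n Cal Ret Itn \<longleftrightarrow>
     (\<forall>k<n. finite (Sig Cal Ret Itn k)
        \<and> Cal k \<inter> Ret k = {} \<and> Cal k \<inter> Itn k = {} \<and> Ret k \<inter> Itn k = {})
   \<and> (\<forall>k<n. \<forall>j<n. k \<noteq> j \<longrightarrow> Sig Cal Ret Itn k \<inter> Sig Cal Ret Itn j = {})"

inductive wm :: "'a set \<Rightarrow> 'a set \<Rightarrow> 'a set \<Rightarrow> 'a list \<Rightarrow> bool" for Cs Rs Is where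
  wm_Nil: "wm Cs Rs Is []"
| wm_int: "a \<in> Is \<Longrightarrow> wm Cs Rs Is [a]"
| wm_nest: "c \<in> Cs \<Longrightarrow> r \<in> Rs \<Longrightarrow> wm Cs Rs Is u \<Longrightarrow> wm Cs Rs Is (c # u @ [r])"
| wm_app: "wm Cs Rs Is u \<Longrightarrow> wm Cs Rs Is v \<Longrightarrow> wm Cs Rs Is (u @ v)"

definition matched :: "'a set \<Rightarrow> 'a set \<Rightarrow> 'a set \<Rightarrow> 'a list \<Rightarrow> nat \<Rightarrow> nat \<Rightarrow> bool" where
  "matched Cs Rs Is w i j \<longleftrightarrow> i < j \<and> j < length w \<and> w ! i \<in> Cs \<and> w ! j \<in> Rs
     \<and> wm Cs Rs Is (take (j - i - 1) (drop (i + 1) w))"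

text \<open>Visibly pushdown automata (Alur--Madhusudan): states and stack symbols are
  drawn from finite sets of naturals; a return on the empty stack reads the bottom
  symbol (None) and leaves the stack empty.\<close>
inductive vpa_run :: "'a set \<Rightarrow> 'a set \<Rightarrow> 'a set
    \<Rightarrow> (nat \<times> 'a \<times> nat \<times> nat) set \<Rightarrow> (nat \<times> 'a \<times> nat option \<times> nat) set
    \<Rightarrow> (nat \<times> 'a \<times> nat) set
    \<Rightarrow> nat \<Rightarrow> nat list \<Rightarrow> 'a list \<Rightarrow> nat \<Rightarrow> nat list \<Rightarrow> bool"
  for Cs Rs Is dc dr di where
  run_Nil: "vpa_run Cs Rs Is dc dr di q st [] q st"
| run_call: "x \<in> Cs \<Longrightarrow> (q, x, q', g) \<in> dc \<Longrightarrow> vpa_run Cs Rs Is dc dr di q' (g # st) w q'' st''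
     \<Longrightarrow> vpa_run Cs Rs Is dc dr di q st (x # w) q'' st''"
| run_ret: "x \<in> Rs \<Longrightarrow> (q, x, Some g, q') \<in> dr \<Longrightarrow> vpa_run Cs Rs Is dc dr di q' st w q'' st''
     \<Longrightarrow> vpa_run Cs Rs Is dc dr di q (g # st) (x # w) q'' st''"
| run_ret_bot: "x \<in> Rs \<Longrightarrow> (q, x, None, q') \<in> dr \<Longrightarrow> vpa_run Cs Rs Is dc dr di q' [] w q'' st''
     \<Longrightarrow> vpa_run Cs Rs Is dc dr di q [] (x # w) q'' st''"
| run_int: "x \<in> Is \<Longrightarrow> (q, x, q') \<in> di \<Longrightarrow> vpa_run Cs Rs Is dc dr di q' st w q'' st''
     \<Longrightarrow> vpa_run Cs Rs Is dc dr di q st (x # w) q'' st''"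

definition is_vpl :: "'a set \<Rightarrow> 'a set \<Rightarrow> 'a set \<Rightarrow> 'a list set \<Rightarrow> bool" where
  "is_vpl Cs Rs Is L \<longleftrightarrow>
    (\<exists>(Q::nat set) (Gam::nat set) Q0 Fin dc dr di.
       finite Q \<and> finite Gam \<and> Q0 \<subseteq> Q \<and> Fin \<subseteq> Q
     \<and> dc \<subseteq> Q \<times> Cs \<times> Q \<times> Gam
     \<and> dr \<subseteq> Q \<times> Rs \<times> (Some ` Gam \<union> {None}) \<times> Q
     \<and> di \<subseteq> Q \<times> Is \<times> Q
     \<and> L = {w. set w \<subseteq> Cs \<union> Rs \<union> Is \<and>
              (\<exists>q0\<in>Q0. \<exists>q st. vpa_run Cs Rs Is dc dr di q0 [] w q st \<and> q \<in> Fin)})"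

definition wm_vpl :: "'a set \<Rightarrow> 'a set \<Rightarrow> 'a set \<Rightarrow> 'a list set \<Rightarrow> bool" where
  "wm_vpl Cs Rs Is L \<longleftrightarrow> is_vpl Cs Rs Is L \<and> (\<forall>w\<in>L. wm Cs Rs Is w)"

definition shuffle :: "nat \<Rightarrow> (nat \<Rightarrow> 'a set) \<Rightarrow> (nat \<Rightarrow> 'a set) \<Rightarrow> (nat \<Rightarrow> 'a set)
    \<Rightarrow> (nat \<Rightarrow> 'a list set) \<Rightarrow> 'a list set" where
  "shuffle n Cal Ret Itn P = {w. set w \<subseteq> (\<Union>k<n. Sig Cal Ret Itn k)
      \<and> (\<forall>k<n. filter (\<lambda>x. x \<in> Sig Cal Ret Itn k) w \<in> P k)}"

definition well_nested :: "nat \<Rightarrow> (nat \<Rightarrow> 'a set) \<Rightarrow> (nat \<Rightarrow> 'a set) \<Rightarrow> (nat \<Rightarrow> 'a set)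
    \<Rightarrow> 'a list \<Rightarrow> bool" where
  "well_nested n Cal Ret Itn w \<longleftrightarrow>
     (\<forall>i j. matched (\<Union>k<n. Cal k) (\<Union>k<n. Ret k) (\<Union>k<n. Itn k) w i j \<longrightarrow>
        (\<exists>k<n. w ! i \<in> Sig Cal Ret Itn k \<and> w ! j \<in> Sig Cal Ret Itn k))"

definition bowtie :: "nat \<Rightarrow> (nat \<Rightarrow> 'a set) \<Rightarrow> (nat \<Rightarrow> 'a set) \<Rightarrow> (nat \<Rightarrow> 'a set)
    \<Rightarrow> (nat \<Rightarrow> 'a list set) \<Rightarrow> 'a list set" where
  "bowtie n Cal Ret Itn P = {w \<in> shuffle n Cal Ret Itn P. well_nested n Cal Ret Itn w}"

text \<open>Semantics:
  Fc k c : V_k \<rightarrow> 2^V_k (calls), Fr k r \<nu> \<nu>< : V_k \<times> V_k \<rightarrow> 2^V_k (returns, \<nu> = top frame,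
  \<nu>< = frame below), Fi k a : V_k \<rightarrow> 2^V_k (internals).
  Stacks are nonempty lists with the top frame LAST (S.\<nu> = S @ [\<nu>]).\<close>

definition sem_ok :: "nat \<Rightarrow> (nat \<Rightarrow> 'a set) \<Rightarrow> (nat \<Rightarrow> 'a set) \<Rightarrow> (nat \<Rightarrow> 'a set) \<Rightarrow> (nat \<Rightarrow> 'v set)
    \<Rightarrow> (nat \<Rightarrow> 'a \<Rightarrow> 'v \<Rightarrow> 'v set) \<Rightarrow> (nat \<Rightarrow> 'a \<Rightarrow> 'v \<Rightarrow> 'v \<Rightarrow> 'v set) \<Rightarrow> (nat \<Rightarrow> 'a \<Rightarrow> 'v \<Rightarrow> 'v set) \<Rightarrow> bool" where
  "sem_ok n Cal Ret Itn V Fc Fr Fi \<longleftrightarrow> (\<forall>k<n.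
     (\<forall>c\<in>Cal k. \<forall>\<nu>\<in>V k. Fc k c \<nu> \<subseteq> V k)
   \<and> (\<forall>r\<in>Ret k. \<forall>\<nu>\<in>V k. \<forall>\<nu>'\<in>V k. Fr k r \<nu> \<nu>' \<subseteq> V k)
   \<and> (\<forall>a\<in>Itn k. \<forall>\<nu>\<in>V k. Fi k a \<nu> \<subseteq> V k))"

definition gval :: "nat \<Rightarrow> (nat \<Rightarrow> 'v set) \<Rightarrow> 'v list set" where
  "gval n V = {\<nu>. length \<nu> = n \<and> (\<forall>j<n. \<nu> ! j \<in> V j)}"

definition mconf :: "nat \<Rightarrow> (nat \<Rightarrow> 'v set) \<Rightarrow> 'v list list set" where
  "mconf n V = {cfg. length cfg = n \<and> (\<forall>j<n. cfg ! j \<noteq> [] \<and> set (cfg ! j) \<subseteq> V j)}"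

definition Mstep :: "nat \<Rightarrow> (nat \<Rightarrow> 'a set) \<Rightarrow> (nat \<Rightarrow> 'a set) \<Rightarrow> (nat \<Rightarrow> 'a set) \<Rightarrow> (nat \<Rightarrow> 'v set)
    \<Rightarrow> (nat \<Rightarrow> 'a \<Rightarrow> 'v \<Rightarrow> 'v set) \<Rightarrow> (nat \<Rightarrow> 'a \<Rightarrow> 'v \<Rightarrow> 'v \<Rightarrow> 'v set) \<Rightarrow> (nat \<Rightarrow> 'a \<Rightarrow> 'v \<Rightarrow> 'v set)
    \<Rightarrow> 'a \<Rightarrow> ('v list list \<times> 'v list list) set" where
  "Mstep n Cal Ret Itn V Fc Fr Fi x = {(cfg, cfg'). cfg \<in> mconf n V \<and> (\<exists>k<n.
      (x \<in> Cal k \<and> (\<exists>S \<nu> \<nu>'. cfg ! k = S @ [\<nu>] \<and> \<nu>' \<in> Fc k x \<nu> \<and> cfg' = cfg[k := S @ [\<nu>, \<nu>']]))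
    \<or> (x \<in> Ret k \<and> (\<exists>S \<nu>0 \<nu> \<nu>'. cfg ! k = S @ [\<nu>0, \<nu>] \<and> \<nu>' \<in> Fr k x \<nu> \<nu>0 \<and> cfg' = cfg[k := S @ [\<nu>']]))
    \<or> (x \<in> Itn k \<and> (\<exists>S \<nu> \<nu>'. cfg ! k = S @ [\<nu>] \<and> \<nu>' \<in> Fi k x \<nu> \<and> cfg' = cfg[k := S @ [\<nu>']])))}"

fun Msem :: "nat \<Rightarrow> (nat \<Rightarrow> 'a set) \<Rightarrow> (nat \<Rightarrow> 'a set) \<Rightarrow> (nat \<Rightarrow> 'a set) \<Rightarrow> (nat \<Rightarrow> 'v set)
    \<Rightarrow> (nat \<Rightarrow> 'a \<Rightarrow> 'v \<Rightarrow> 'v set) \<Rightarrow> (nat \<Rightarrow> 'a \<Rightarrow> 'v \<Rightarrow> 'v \<Rightarrow> 'v set) \<Rightarrow> (nat \<Rightarrow> 'a \<Rightarrow> 'v \<Rightarrow> 'v set)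
    \<Rightarrow> 'a list \<Rightarrow> ('v list list \<times> 'v list list) set" where
  "Msem n Cal Ret Itn V Fc Fr Fi [] = Id_on (mconf n V)"
| "Msem n Cal Ret Itn V Fc Fr Fi (x # w) =
     Mstep n Cal Ret Itn V Fc Fr Fi x O Msem n Cal Ret Itn V Fc Fr Fi w"

definition sconf :: "nat \<Rightarrow> (nat \<Rightarrow> 'v set) \<Rightarrow> 'v list list set" where
  "sconf n V = {S. S \<noteq> [] \<and> set S \<subseteq> gval n V}"

definition Sstep :: "nat \<Rightarrow> (nat \<Rightarrow> 'a set) \<Rightarrow> (nat \<Rightarrow> 'a set) \<Rightarrow> (nat \<Rightarrow> 'a set) \<Rightarrow> (nat \<Rightarrow> 'v set)
    \<Rightarrow> (nat \<Rightarrow> 'a \<Rightarrow> 'v \<Rightarrow> 'v set) \<Rightarrow> (nat \<Rightarrow> 'a \<Rightarrow> 'v \<Rightarrow> 'v \<Rightarrow> 'v set) \<Rightarrow> (nat \<Rightarrow> 'a \<Rightarrow> 'v \<Rightarrow> 'v set)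
    \<Rightarrow> 'a \<Rightarrow> ('v list list \<times> 'v list list) set" where
  "Sstep n Cal Ret Itn V Fc Fr Fi x = {(st, st'). st \<in> sconf n V \<and> (\<exists>k<n.
      (x \<in> Cal k \<and> (\<exists>S \<nu> u. st = S @ [\<nu>] \<and> u \<in> Fc k x (\<nu> ! k) \<and> st' = S @ [\<nu>, \<nu>[k := u]]))
    \<or> (x \<in> Ret k \<and> (\<exists>S \<nu>0 \<nu> u. st = S @ [\<nu>0, \<nu>] \<and> u \<in> Fr k x (\<nu> ! k) (\<nu>0 ! k)
                                   \<and> st' = S @ [\<nu>[k := u]]))
    \<or> (x \<in> Itn k \<and> (\<exists>S \<nu> u. st = S @ [\<nu>] \<and> u \<in> Fi k x (\<nu> ! k) \<and> st' = S @ [\<nu>[k := u]])))}"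

fun Ssem :: "nat \<Rightarrow> (nat \<Rightarrow> 'a set) \<Rightarrow> (nat \<Rightarrow> 'a set) \<Rightarrow> (nat \<Rightarrow> 'a set) \<Rightarrow> (nat \<Rightarrow> 'v set)
    \<Rightarrow> (nat \<Rightarrow> 'a \<Rightarrow> 'v \<Rightarrow> 'v set) \<Rightarrow> (nat \<Rightarrow> 'a \<Rightarrow> 'v \<Rightarrow> 'v \<Rightarrow> 'v set) \<Rightarrow> (nat \<Rightarrow> 'a \<Rightarrow> 'v \<Rightarrow> 'v set)
    \<Rightarrow> 'a list \<Rightarrow> ('v list list \<times> 'v list list) set" where
  "Ssem n Cal Ret Itn V Fc Fr Fi [] = Id_on (sconf n V)"
| "Ssem n Cal Ret Itn V Fc Fr Fi (x # w) =
     Sstep n Cal Ret Itn V Fc Fr Fi x O Ssem n Cal Ret Itn V Fc Fr Fi w"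

text \<open>Assertions are predicates on global valuations (tuples (\<nu>_1,...,\<nu>_n) as lists).
  For the n-stack semantics the tuple of top frames is map last cfg.\<close>
definition valid_M where
  "valid_M n Cal Ret Itn V Fc Fr Fi (A :: 'v list \<Rightarrow> bool) \<rho> B \<longleftrightarrow>
     (\<forall>(cfg, cfg') \<in> Msem n Cal Ret Itn V Fc Fr Fi \<rho>. A (map last cfg) \<longrightarrow> B (map last cfg'))"

definition valid_S where
  "valid_S n Cal Ret Itn V Fc Fr Fi (A :: 'v list \<Rightarrow> bool) \<rho> B \<longleftrightarrow>
     (\<forall>(st, st') \<in> Ssem n Cal Ret Itn V Fc Fr Fi \<rho>. A (last st) \<longrightarrow> B (last st'))"

end

theory Submission
  imports Defs
begin

text \<open>On a well-nested word every return is matched, inside the word, by a call of the same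
  program.  Hence neither semantics ever looks below the top frames it starts with: a single-stack
  run from \<open>S.\<nu>\<close> ends in some \<open>S.\<nu>'\<close> where \<open>\<nu>'\<close> is reachable from \<open>\<nu>\<close> alone, and an
  \<open>n\<close>-stack run changes only the top frame of each stack, the tuple of tops following a
  single-stack run from the initial tops, and conversely.  So both Hoare triples are equivalent to
  the same statement about single-frame runs.  Well-nestedness, defined through matched
  positions, is first turned into an inductive grammar; for this the shuffle is shown to be
  well-matched by counting stack heights, which add up over the projections.\<close>

fun height :: "'a set \<Rightarrow> 'a set \<Rightarrow> 'a list \<Rightarrow> int" where
  "height Cs Rs [] = 0"
| "height Cs Rs (x # w) = (if x \<in> Cs then 1 else if x \<in> Rs then -1 else 0) + height Cs Rs w"

lemma height_append [simp]: "height Cs Rs (u @ v) = height Cs Rs u + height Cs Rs v"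
  by (induction u) auto

lemma wm_imp_height:
  assumes "Cs \<inter> Rs = {}" "Cs \<inter> Is = {}" "Rs \<inter> Is = {}" and "wm Cs Rs Is w"
  shows "height Cs Rs w = 0 \<and> (\<forall>m. 0 \<le> height Cs Rs (take m w))"
  using assms(4)
proof (induction rule: wm.induct)
  case (wm_int a)
  then show ?case using assms(2,3) by (auto simp: take_Cons')
next
  case (wm_nest c r u)
  have "0 \<le> height Cs Rs (take m (c # u @ [r]))" for m
    using wm_nest by (cases m) (auto simp: take_Cons')
  then show ?case using wm_nest assms(1) by auto
qed auto

(* The offset d only serves the induction; the lemma is used with d = 0. *)
lemma height_first_return:
  assumes "d + height Cs Rs w < 0" "0 \<le> d"
  shows "\<exists>u r v. w = u @ r # v \<and> r \<in> Rs - Cs \<and> d + height Cs Rs u = 0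
           \<and> (\<forall>m. 0 \<le> d + height Cs Rs (take m u))"
  using assms
proof (induction w arbitrary: d)
  case (Cons x w)
  show ?case
  proof (cases "d + height Cs Rs [x] < 0")
    case True
    then show ?thesis using Cons.prems by (intro exI[of _ "[]"]) (auto split: if_splits)
  next
    case False
    then obtain u r v where "w = u @ r # v" "r \<in> Rs - Cs" "d + height Cs Rs [x] + height Cs Rs u = 0"
        "\<forall>m. 0 \<le> d + height Cs Rs [x] + height Cs Rs (take m u)"
      using Cons.IH[of "d + height Cs Rs [x]"] Cons.prems by auto
    then show ?thesis using Cons.prems
      by (intro exI[of _ "x # u"]) (auto simp: take_Cons' add.assoc)
  qed
qed simp

lemma height_imp_wm:
  assumes "set w \<subseteq> Cs \<union> Rs \<union> Is" "height Cs Rs w = 0" "\<forall>m. 0 \<le> height Cs Rs (take m w)"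
  shows "wm Cs Rs Is w"
  using assms
proof (induction "length w" arbitrary: w rule: less_induct)
  case less
  show ?case
  proof (cases w)
    case Nil
    then show ?thesis by (simp add: wm_Nil)
  next
    case (Cons x w')
    have prefixes: "0 \<le> height Cs Rs [x] + height Cs Rs (take m w')" for m
      using less.prems(3) spec[OF less.prems(3), of "Suc m"] Cons by simp
    consider "x \<in> Cs" | "x \<notin> Cs" "x \<notin> Rs" "x \<in> Is"
      using less.prems(1) spec[OF less.prems(3), of 1] Cons by (auto split: if_splits)
    then show ?thesis
    proof cases
      case 1
      then obtain u r v where w': "w' = u @ r # v" "r \<in> Rs - Cs" "height Cs Rs u = 0"
          "\<forall>m. 0 \<le> height Cs Rs (take m u)"
        using height_first_return[of 0 Cs Rs w'] less.prems(2) Cons by auto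
      have "0 \<le> height Cs Rs (take m v)" for m
        using spec[OF less.prems(3), of "Suc (length u + Suc m)"] Cons w' 1 by simp
      then have "wm Cs Rs Is v"
        using less Cons w' 1 by auto
      moreover have "wm Cs Rs Is u"
        using less Cons w' by auto
      ultimately have "wm Cs Rs Is ((x # u @ [r]) @ v)"
        using 1 w'(2) by (blast intro: wm_app wm_nest)
      then show ?thesis using Cons w' by simp
    next
      case 2
      then have "wm Cs Rs Is w'" using less Cons prefixes by auto
      then have "wm Cs Rs Is ([x] @ w')" using 2 by (blast intro: wm_app wm_int)
      then show ?thesis using Cons by simp
    qed
  qed
qed

lemma filter_take_eq_take_filter: "\<exists>m'. filter P (take m xs) = take m' (filter P xs)"
proof -
  have "filter P xs = filter P (take m xs) @ filter P (drop m xs)"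
    by (metis append_take_drop_id filter_append)
  then show ?thesis
    by (metis append_eq_conv_conj)
qed

lemma map_update_nth_self: "k < length xs \<Longrightarrow> (map f xs)[k := f (xs ! k)] = map f xs"
  by (metis list_update_id map_update)

inductive nested_wm :: "nat \<Rightarrow> (nat \<Rightarrow> 'a set) \<Rightarrow> (nat \<Rightarrow> 'a set) \<Rightarrow> (nat \<Rightarrow> 'a set) \<Rightarrow> 'a list \<Rightarrow> bool"
  for n Cal Ret Itn where
  nested_Nil: "nested_wm n Cal Ret Itn []"
| nested_int: "k < n \<Longrightarrow> a \<in> Itn k \<Longrightarrow> nested_wm n Cal Ret Itn [a]"
| nested_call_ret: "k < n \<Longrightarrow> c \<in> Cal k \<Longrightarrow> r \<in> Ret k \<Longrightarrow> nested_wm n Cal Ret Itn u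
    \<Longrightarrow> nested_wm n Cal Ret Itn (c # u @ [r])"
| nested_append: "nested_wm n Cal Ret Itn u \<Longrightarrow> nested_wm n Cal Ret Itn v
    \<Longrightarrow> nested_wm n Cal Ret Itn (u @ v)"

lemma matched_infix:
  assumes "matched Cs Rs Is v i j"
  shows "matched Cs Rs Is (u @ v @ w) (length u + i) (length u + j)"
proof -
  have "take (j - i - 1) (drop (i + 1) v) = take (j - i - 1) (drop (length u + i + 1) (u @ v @ w))"
    using assms by (simp add: matched_def)
  then show ?thesis using assms by (simp add: matched_def nth_append)
qed

lemma well_nested_infix:
  assumes "well_nested n Cal Ret Itn (u @ v @ w)"
  shows "well_nested n Cal Ret Itn v"
  unfolding well_nested_def
proof (intro allI impI)
  fix i j
  assume "matched (\<Union>k<n. Cal k) (\<Union>k<n. Ret k) (\<Union>k<n. Itn k) v i j"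
  moreover from this have "i < length v" "j < length v"
    by (auto simp: matched_def)
  ultimately obtain k where "k < n" "(u @ v @ w) ! (length u + i) \<in> Sig Cal Ret Itn k"
      "(u @ v @ w) ! (length u + j) \<in> Sig Cal Ret Itn k"
    using assms matched_infix unfolding well_nested_def by blast
  with \<open>i < length v\<close> \<open>j < length v\<close>
  show "\<exists>k<n. v ! i \<in> Sig Cal Ret Itn k \<and> v ! j \<in> Sig Cal Ret Itn k"
    by (auto simp: nth_append)
qed

locale vp_system =
  fixes n :: nat and Cal Ret Itn :: "nat \<Rightarrow> 'a set"
  assumes vp_alphabets: "vp_alphabets n Cal Ret Itn"
begin

abbreviation "Calls \<equiv> \<Union>k<n. Cal k"
abbreviation "Rets \<equiv> \<Union>k<n. Ret k"
abbreviation "Itns \<equiv> \<Union>k<n. Itn k"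

lemma owner_unique:
  "k < n \<Longrightarrow> j < n \<Longrightarrow> x \<in> Sig Cal Ret Itn k \<Longrightarrow> x \<in> Sig Cal Ret Itn j \<Longrightarrow> j = k"
  using vp_alphabets unfolding vp_alphabets_def by blast

lemma kinds_disjoint:
  "k < n \<Longrightarrow> Cal k \<inter> Ret k = {}" "k < n \<Longrightarrow> Cal k \<inter> Itn k = {}" "k < n \<Longrightarrow> Ret k \<inter> Itn k = {}"
  using vp_alphabets unfolding vp_alphabets_def by blast+

lemma Sig_memI:
  "x \<in> Cal k \<Longrightarrow> x \<in> Sig Cal Ret Itn k" "x \<in> Ret k \<Longrightarrow> x \<in> Sig Cal Ret Itn k"
  "x \<in> Itn k \<Longrightarrow> x \<in> Sig Cal Ret Itn k"
  by (simp_all add: Sig_def)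

lemma ex_owner_iff:
  assumes "k < n" "x \<in> Sig Cal Ret Itn k"
  shows "(\<exists>j<n. x \<in> Cal j \<and> A j \<or> x \<in> Ret j \<and> B j \<or> x \<in> Itn j \<and> C j)
    \<longleftrightarrow> x \<in> Cal k \<and> A k \<or> x \<in> Ret k \<and> B k \<or> x \<in> Itn k \<and> C k"
  using assms owner_unique unfolding Sig_def by blast

lemma height_eq_sum_projections:
  "set w \<subseteq> (\<Union>k<n. Sig Cal Ret Itn k) \<Longrightarrow>
   height Calls Rets w = (\<Sum>k<n. height (Cal k) (Ret k) (filter (\<lambda>x. x \<in> Sig Cal Ret Itn k) w))"
proof (induction w)
  case (Cons x w)
  then obtain k0 where k0: "k0 < n" "x \<in> Sig Cal Ret Itn k0" by auto
  then have owner: "k < n \<Longrightarrow> x \<in> Sig Cal Ret Itn k \<longleftrightarrow> k = k0" for k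
    using owner_unique by blast
  have "k < n \<Longrightarrow> height (Cal k) (Ret k) (filter (\<lambda>x. x \<in> Sig Cal Ret Itn k) (x # w))
      = (if k = k0 then height (Cal k0) (Ret k0) [x] else 0)
        + height (Cal k) (Ret k) (filter (\<lambda>x. x \<in> Sig Cal Ret Itn k) w)" for k
    using owner by simp
  then have "(\<Sum>k<n. height (Cal k) (Ret k) (filter (\<lambda>x. x \<in> Sig Cal Ret Itn k) (x # w)))
      = height (Cal k0) (Ret k0) [x] + (\<Sum>k<n. height (Cal k) (Ret k) (filter (\<lambda>x. x \<in> Sig Cal Ret Itn k) w))"
    using k0(1) by (simp add: sum.distrib)
  moreover have "height Calls Rets [x] = height (Cal k0) (Ret k0) [x]"
    using owner k0 unfolding Sig_def by auto
  ultimately show ?case using Cons by simp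
qed simp

lemma shuffle_wm:
  assumes "\<forall>k<n. \<forall>w\<in>P k. wm (Cal k) (Ret k) (Itn k) w" and "\<rho> \<in> shuffle n Cal Ret Itn P"
  shows "wm Calls Rets Itns \<rho>"
proof (rule height_imp_wm)
  have alphabet: "set \<rho> \<subseteq> (\<Union>k<n. Sig Cal Ret Itn k)"
    using assms(2) unfolding shuffle_def by auto
  then show "set \<rho> \<subseteq> Calls \<union> Rets \<union> Itns"
    unfolding Sig_def by auto
  have projection_height: "height (Cal k) (Ret k) (filter (\<lambda>x. x \<in> Sig Cal Ret Itn k) \<rho>) = 0 \<and>
      (\<forall>m. 0 \<le> height (Cal k) (Ret k) (take m (filter (\<lambda>x. x \<in> Sig Cal Ret Itn k) \<rho>)))"
    if "k < n" for k
    using that assms wm_imp_height[OF kinds_disjoint[OF that]]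
    unfolding shuffle_def by blast
  then show "height Calls Rets \<rho> = 0"
    using height_eq_sum_projections[OF alphabet] by simp
  show "\<forall>m. 0 \<le> height Calls Rets (take m \<rho>)"
  proof
    fix m
    have "0 \<le> height (Cal k) (Ret k) (filter (\<lambda>x. x \<in> Sig Cal Ret Itn k) (take m \<rho>))" if "k < n" for k
      using projection_height[OF that] filter_take_eq_take_filter by metis
    moreover have "set (take m \<rho>) \<subseteq> (\<Union>k<n. Sig Cal Ret Itn k)"
      using alphabet set_take_subset by fast
    ultimately show "0 \<le> height Calls Rets (take m \<rho>)"
      using height_eq_sum_projections by (auto intro: sum_nonneg)
  qed
qed

lemma nested_wm_if_well_nested:
  "wm Calls Rets Itns w \<Longrightarrow> well_nested n Cal Ret Itn w \<Longrightarrow> nested_wm n Cal Ret Itn w"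
proof (induction rule: wm.induct)
  case (wm_int a)
  then show ?case by (blast intro: nested_int)
next
  case (wm_nest c r u)
  have "matched Calls Rets Itns (c # u @ [r]) 0 (Suc (length u))"
    using wm_nest.hyps unfolding matched_def by (simp add: nth_append)
  then obtain k where k: "k < n" "c \<in> Sig Cal Ret Itn k" "r \<in> Sig Cal Ret Itn k"
    using wm_nest.prems unfolding well_nested_def by (metis nth_Cons_0 nth_Cons_Suc nth_append_length)
  moreover have "c \<in> Cal k" "r \<in> Ret k"
    using wm_nest.hyps k owner_unique unfolding Sig_def by blast+
  moreover have "nested_wm n Cal Ret Itn u"
    using wm_nest.IH wm_nest.prems well_nested_infix[of n Cal Ret Itn "[c]" u "[r]"] by simp
  ultimately show ?case by (blast intro: nested_call_ret)
next
  case (wm_app u v)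
  then show ?case
    using well_nested_infix[of n Cal Ret Itn "[]" u v] well_nested_infix[of n Cal Ret Itn u v "[]"]
    by (simp add: nested_append)
qed (rule nested_Nil)

lemma bowtie_nested_wm:
  assumes "\<forall>k<n. \<forall>w\<in>P k. wm (Cal k) (Ret k) (Itn k) w" and "\<rho> \<in> bowtie n Cal Ret Itn P"
  shows "nested_wm n Cal Ret Itn \<rho>"
  using assms shuffle_wm nested_wm_if_well_nested unfolding bowtie_def by blast

end

locale vp_semantics = vp_system n Cal Ret Itn
  for n :: nat and Cal Ret Itn :: "nat \<Rightarrow> 'a set" +
  fixes V :: "nat \<Rightarrow> 'v set"
    and Fc Fi :: "nat \<Rightarrow> 'a \<Rightarrow> 'v \<Rightarrow> 'v set"
    and Fr :: "nat \<Rightarrow> 'a \<Rightarrow> 'v \<Rightarrow> 'v \<Rightarrow> 'v set"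
begin

abbreviation "mstep \<equiv> Mstep n Cal Ret Itn V Fc Fr Fi"
abbreviation "msem \<equiv> Msem n Cal Ret Itn V Fc Fr Fi"
abbreviation "sstep \<equiv> Sstep n Cal Ret Itn V Fc Fr Fi"
abbreviation "ssem \<equiv> Ssem n Cal Ret Itn V Fc Fr Fi"

lemma mstep_call:
  assumes "k < n" "x \<in> Cal k" "c ! k = S @ [\<nu>]"
  shows "(c, c') \<in> mstep x \<longleftrightarrow> c \<in> mconf n V \<and> (\<exists>\<nu>'\<in>Fc k x \<nu>. c' = c[k := S @ [\<nu>, \<nu>']])"
  unfolding Mstep_def mem_Collect_eq case_prod_conv ex_owner_iff[OF assms(1) Sig_memI(1)[OF assms(2)]]
  using assms kinds_disjoint[OF assms(1)] by auto

lemma mstep_ret: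
  assumes "k < n" "x \<in> Ret k" "c ! k = S @ [\<nu>0, \<nu>]"
  shows "(c, c') \<in> mstep x \<longleftrightarrow> c \<in> mconf n V \<and> (\<exists>\<nu>'\<in>Fr k x \<nu> \<nu>0. c' = c[k := S @ [\<nu>']])"
  unfolding Mstep_def mem_Collect_eq case_prod_conv ex_owner_iff[OF assms(1) Sig_memI(2)[OF assms(2)]]
  using assms kinds_disjoint[OF assms(1)] by auto

lemma mstep_int:
  assumes "k < n" "x \<in> Itn k" "c ! k = S @ [\<nu>]"
  shows "(c, c') \<in> mstep x \<longleftrightarrow> c \<in> mconf n V \<and> (\<exists>\<nu>'\<in>Fi k x \<nu>. c' = c[k := S @ [\<nu>']])"
  unfolding Mstep_def mem_Collect_eq case_prod_conv ex_owner_iff[OF assms(1) Sig_memI(3)[OF assms(2)]]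
  using assms kinds_disjoint[OF assms(1)] by auto

lemma sstep_call:
  assumes "k < n" "x \<in> Cal k"
  shows "(S @ [\<nu>], st') \<in> sstep x \<longleftrightarrow> S @ [\<nu>] \<in> sconf n V
    \<and> (\<exists>u\<in>Fc k x (\<nu> ! k). st' = S @ [\<nu>, \<nu>[k := u]])"
  unfolding Sstep_def mem_Collect_eq case_prod_conv ex_owner_iff[OF assms(1) Sig_memI(1)[OF assms(2)]]
  using assms kinds_disjoint[OF assms(1)] by auto

lemma sstep_ret:
  assumes "k < n" "x \<in> Ret k"
  shows "(S @ [\<nu>0, \<nu>], st') \<in> sstep x \<longleftrightarrow> S @ [\<nu>0, \<nu>] \<in> sconf n V
    \<and> (\<exists>u\<in>Fr k x (\<nu> ! k) (\<nu>0 ! k). st' = S @ [\<nu>[k := u]])"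
  unfolding Sstep_def mem_Collect_eq case_prod_conv ex_owner_iff[OF assms(1) Sig_memI(2)[OF assms(2)]]
  using assms kinds_disjoint[OF assms(1)] by auto

lemma sstep_int:
  assumes "k < n" "x \<in> Itn k"
  shows "(S @ [\<nu>], st') \<in> sstep x \<longleftrightarrow> S @ [\<nu>] \<in> sconf n V
    \<and> (\<exists>u\<in>Fi k x (\<nu> ! k). st' = S @ [\<nu>[k := u]])"
  unfolding Sstep_def mem_Collect_eq case_prod_conv ex_owner_iff[OF assms(1) Sig_memI(3)[OF assms(2)]]
  using assms kinds_disjoint[OF assms(1)] by auto

lemma sstep_frame:
  assumes "(st, st') \<in> sstep x" "set S \<subseteq> gval n V"
  shows "(S @ st, S @ st') \<in> sstep x"
  using assms unfolding Sstep_def sconf_def by clarsimp (metis append_assoc)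

lemma msem_mconf: "(c, c') \<in> msem w \<Longrightarrow> c \<in> mconf n V \<and> c' \<in> mconf n V"
  by (induction w arbitrary: c) (auto simp: Mstep_def)

lemma ssem_sconf: "(st, st') \<in> ssem w \<Longrightarrow> st \<in> sconf n V \<and> st' \<in> sconf n V"
  by (induction w arbitrary: st) (auto simp: Sstep_def)

lemma msem_append: "msem (u @ v) = msem u O msem v"
  by (induction u) (auto simp: O_assoc dest: msem_mconf)

lemma ssem_append: "ssem (u @ v) = ssem u O ssem v"
  by (induction u) (auto simp: O_assoc dest: ssem_sconf)

lemma ssem_frame:
  assumes "(st, st') \<in> ssem w" "set S \<subseteq> gval n V"
  shows "(S @ st, S @ st') \<in> ssem w"
  using assms by (induction w arbitrary: st) (auto simp: sconf_def intro: sstep_frame)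

lemma ssem_int_iff:
  assumes "k < n" "a \<in> Itn k"
  shows "([\<nu>], [\<nu>']) \<in> ssem [a] \<longleftrightarrow>
    \<nu> \<in> gval n V \<and> \<nu>' \<in> gval n V \<and> (\<exists>u\<in>Fi k a (\<nu> ! k). \<nu>' = \<nu>[k := u])"
  using sstep_int[OF assms, of "[]" \<nu>] by (auto simp: sconf_def relcomp_unfold)

lemma ssem_call_retI:
  assumes "k < n" "c \<in> Cal k" "r \<in> Ret k" "\<nu> \<in> gval n V" "\<nu>2[k := w] \<in> gval n V"
    and "u0 \<in> Fc k c (\<nu> ! k)" "([\<nu>[k := u0]], [\<nu>2]) \<in> ssem u" "w \<in> Fr k r (\<nu>2 ! k) (\<nu> ! k)"
  shows "([\<nu>], [\<nu>2[k := w]]) \<in> ssem (c # u @ [r])"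
proof -
  have "([\<nu>], [\<nu>, \<nu>[k := u0]]) \<in> sstep c"
    using sstep_call[OF assms(1,2), of "[]"] assms(4,6) by (auto simp: sconf_def)
  moreover have "([\<nu>, \<nu>[k := u0]], [\<nu>, \<nu>2]) \<in> ssem u"
    using ssem_frame[OF assms(7), of "[\<nu>]"] assms(4) by simp
  moreover have "([\<nu>, \<nu>2], [\<nu>2[k := w]]) \<in> sstep r"
    using sstep_ret[OF assms(1,3), of "[]"] ssem_sconf[OF calculation(2)] assms(8)
    by (auto simp: sconf_def)
  moreover have "[\<nu>2[k := w]] \<in> sconf n V"
    using assms(5) by (simp add: sconf_def)
  ultimately show ?thesis
    by (auto simp: ssem_append)
qed

lemma ssem_nested_strip_frame:
  assumes "nested_wm n Cal Ret Itn w" "(S @ [\<nu>], st') \<in> ssem w"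
  shows "\<exists>\<nu>'. st' = S @ [\<nu>'] \<and> ([\<nu>], [\<nu>']) \<in> ssem w"
  using assms
proof (induction w arbitrary: S \<nu> st' rule: nested_wm.induct)
  case nested_Nil
  then show ?case by (auto simp: sconf_def)
next
  case (nested_int k a)
  then have "(S @ [\<nu>], st') \<in> sstep a" "st' \<in> sconf n V"
    by auto
  then show ?case
    using sstep_int[OF nested_int(1,2)] ssem_int_iff[OF nested_int(1,2)] by (auto simp: sconf_def)
next
  case (nested_call_ret k c r u)
  from nested_call_ret.prems obtain st1 st2 where
    run: "(S @ [\<nu>], st1) \<in> sstep c" "(st1, st2) \<in> ssem u" "(st2, st') \<in> sstep r" "st' \<in> sconf n V"
    by (auto simp: ssem_append)
  then obtain u0 where u0: "u0 \<in> Fc k c (\<nu> ! k)" "st1 = (S @ [\<nu>]) @ [\<nu>[k := u0]]" "\<nu> \<in> gval n V"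
    using sstep_call[OF nested_call_ret(1,2)] by (auto simp: sconf_def)
  then obtain \<nu>2 where \<nu>2: "st2 = S @ [\<nu>, \<nu>2]" "([\<nu>[k := u0]], [\<nu>2]) \<in> ssem u"
    using nested_call_ret.IH run(2) by fastforce
  then obtain w where "w \<in> Fr k r (\<nu>2 ! k) (\<nu> ! k)" "st' = S @ [\<nu>2[k := w]]"
    using run(3) sstep_ret[OF nested_call_ret(1,3)] by auto
  then show ?case
    using ssem_call_retI[OF nested_call_ret(1-3) u0(3) _ u0(1) \<nu>2(2)] run(4) by (auto simp: sconf_def)
next
  case (nested_append u v)
  then show ?case by (fastforce simp: ssem_append)
qed

lemma ssem_nested_call_ret_iff:
  assumes "k < n" "c \<in> Cal k" "r \<in> Ret k" "nested_wm n Cal Ret Itn u"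
  shows "([\<nu>], [\<nu>']) \<in> ssem (c # u @ [r]) \<longleftrightarrow> \<nu> \<in> gval n V \<and> \<nu>' \<in> gval n V \<and>
    (\<exists>u0\<in>Fc k c (\<nu> ! k). \<exists>\<nu>2. ([\<nu>[k := u0]], [\<nu>2]) \<in> ssem u \<and>
       (\<exists>w\<in>Fr k r (\<nu>2 ! k) (\<nu> ! k). \<nu>' = \<nu>2[k := w]))"
    (is "_ \<longleftrightarrow> ?summary")
proof
  assume "([\<nu>], [\<nu>']) \<in> ssem (c # u @ [r])"
  then obtain st1 st2 where
    run: "([\<nu>], st1) \<in> sstep c" "(st1, st2) \<in> ssem u" "(st2, [\<nu>']) \<in> sstep r" "[\<nu>'] \<in> sconf n V"
    by (auto simp: ssem_append)
  then obtain u0 where u0: "u0 \<in> Fc k c (\<nu> ! k)" "st1 = [\<nu>] @ [\<nu>[k := u0]]" "\<nu> \<in> gval n V"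
    using sstep_call[OF assms(1,2), of "[]"] by (auto simp: sconf_def)
  then obtain \<nu>2 where "st2 = [\<nu>, \<nu>2]" "([\<nu>[k := u0]], [\<nu>2]) \<in> ssem u"
    using ssem_nested_strip_frame[OF assms(4)] run(2) by fastforce
  then show ?summary
    using run(3,4) u0 sstep_ret[OF assms(1,3), of "[]"] by (auto simp: sconf_def)
qed (use ssem_call_retI[OF assms(1-3)] in blast)

lemma mconf_length: "c \<in> mconf n V \<Longrightarrow> length c = n"
  by (simp add: mconf_def)

lemma mconf_top_split: "c \<in> mconf n V \<Longrightarrow> k < n \<Longrightarrow> c ! k = butlast (c ! k) @ [map last c ! k]"
  by (simp add: mconf_def)

lemma mconf_tops: "c \<in> mconf n V \<Longrightarrow> map last c \<in> gval n V"
  unfolding mconf_def gval_def by (auto intro: subsetD[OF _ last_in_set])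

lemma mconf_update_top:
  assumes "c \<in> mconf n V" "k < n" "set S \<subseteq> set (c ! k)" "v \<in> V k"
  shows "c[k := S @ [v]] \<in> mconf n V"
  using assms unfolding mconf_def by (auto simp: nth_list_update)

lemma msem_call_ret_imp_ssem:
  assumes "k < n" "c0 \<in> Cal k" "r \<in> Ret k" "(c, c') \<in> msem (c0 # u @ [r])"
    and IH: "\<And>c1 c2. (c1, c2) \<in> msem u \<Longrightarrow>
      ([map last c1], [map last c2]) \<in> ssem u \<and> map butlast c2 = map butlast c1"
  shows "([map last c], [map last c']) \<in> ssem (c0 # u @ [r]) \<and> map butlast c' = map butlast c"
proof -
  from assms(4) obtain c1 c2 where
    run: "(c, c1) \<in> mstep c0" "(c1, c2) \<in> msem u" "(c2, c') \<in> mstep r" "c' \<in> mconf n V"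
    by (auto simp: msem_append)
  have c: "c \<in> mconf n V" "c2 \<in> mconf n V" "length c = n"
    using run msem_mconf mconf_length by (auto simp: Mstep_def)
  define S where "S = butlast (c ! k)"
  obtain u0 where u0: "u0 \<in> Fc k c0 (map last c ! k)" "c1 = c[k := S @ [map last c ! k, u0]]"
    using mstep_call[OF assms(1,2) mconf_top_split[OF c(1) assms(1)]] run(1)
    unfolding S_def by blast
  have inner: "([map last c1], [map last c2]) \<in> ssem u" "map butlast c2 = map butlast c1"
    using IH[OF run(2)] by auto
  have "c2 ! k = S @ [map last c ! k, map last c2 ! k]"
    using mconf_top_split[OF c(2) assms(1)] arg_cong[OF inner(2), of "\<lambda>cs. cs ! k"]
      mconf_length[OF c(2)] c(3) assms(1) u0(2)
    by (simp add: butlast_append)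
  then obtain w where w: "w \<in> Fr k r (map last c2 ! k) (map last c ! k)" "c' = c2[k := S @ [w]]"
    using mstep_ret[OF assms(1,3)] run(3) by blast
  have "([map last c], [(map last c2)[k := w]]) \<in> ssem (c0 # u @ [r])"
    using ssem_call_retI[OF assms(1-3) mconf_tops[OF c(1)] _ u0(1) _ w(1)]
      inner(1) u0(2) w(2) mconf_tops[OF run(4)] by (simp add: map_update)
  moreover have "map last c' = (map last c2)[k := w]"
    using w(2) by (simp add: map_update)
  moreover have "map butlast c' = map butlast c"
    using w(2) inner(2) u0(2) c(3) assms(1)
    by (simp add: map_update butlast_append S_def map_update_nth_self)
  ultimately show ?thesis by simp
qed

lemma msem_nested_imp_ssem:
  assumes "nested_wm n Cal Ret Itn w" "(c, c') \<in> msem w"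
  shows "([map last c], [map last c']) \<in> ssem w \<and> map butlast c' = map butlast c"
  using assms
proof (induction w arbitrary: c c' rule: nested_wm.induct)
  case nested_Nil
  then show ?case using mconf_tops by (auto simp: sconf_def)
next
  case (nested_int k a)
  then have c: "c \<in> mconf n V" "(c, c') \<in> mstep a" "c' \<in> mconf n V"
    by (auto simp: Mstep_def)
  then obtain v where "v \<in> Fi k a (map last c ! k)" "c' = c[k := butlast (c ! k) @ [v]]"
    using mstep_int[OF nested_int(1,2) mconf_top_split[OF c(1) nested_int(1)]] by blast
  then show ?case
    using ssem_int_iff[OF nested_int(1,2)] mconf_tops[OF c(1)] mconf_tops[OF c(3)]
      mconf_length[OF c(1)] nested_int(1)
    by (auto simp: map_update map_update_nth_self)
next
  case (nested_call_ret k c0 r u)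
  show ?case
    by (rule msem_call_ret_imp_ssem[OF nested_call_ret(1-3) nested_call_ret.prems nested_call_ret.IH])
next
  case (nested_append u v)
  then obtain c1 where "(c, c1) \<in> msem u" "(c1, c') \<in> msem v"
    by (auto simp: msem_append)
  with nested_append.IH show ?case
    unfolding ssem_append by (metis relcompI)
qed

lemma gval_update_nth: "\<nu>[k := v] \<in> gval n V \<Longrightarrow> k < n \<Longrightarrow> v \<in> V k"
  unfolding gval_def by (metis (mono_tags, lifting) length_list_update mem_Collect_eq nth_list_update_eq)

lemma msem_intI:
  assumes "k < n" "a \<in> Itn k" "c \<in> mconf n V" "v \<in> Fi k a (map last c ! k)" "(map last c)[k := v] \<in> gval n V"
  shows "(c, c[k := butlast (c ! k) @ [v]]) \<in> msem [a]"
proof -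
  have "c[k := butlast (c ! k) @ [v]] \<in> mconf n V"
    using mconf_update_top[OF assms(3,1)] gval_update_nth[OF assms(5,1)] by (auto dest: in_set_butlastD)
  then show ?thesis
    using mstep_int[OF assms(1,2) mconf_top_split[OF assms(3,1)]] assms(3,4) by auto
qed

lemma mstep_callI:
  assumes "k < n" "x \<in> Cal k" "c \<in> mconf n V" "v \<in> Fc k x (map last c ! k)" "(map last c)[k := v] \<in> gval n V"
  shows "(c, c[k := c ! k @ [v]]) \<in> mstep x \<and> c[k := c ! k @ [v]] \<in> mconf n V"
proof -
  obtain S where S: "c ! k = S @ [map last c ! k]"
    using mconf_top_split[OF assms(3,1)] by blast
  then have "(c, c[k := S @ [map last c ! k, v]]) \<in> mstep x"
    using mstep_call[OF assms(1,2) S] assms(3,4) by blast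
  moreover have "c[k := c ! k @ [v]] \<in> mconf n V"
    using mconf_update_top[OF assms(3,1), of "c ! k"] gval_update_nth[OF assms(5,1)] by simp
  ultimately show ?thesis
    using S by simp
qed

lemma msem_retI:
  assumes "k < n" "x \<in> Ret k" "c \<in> mconf n V" "c ! k = S @ [\<nu>0, \<nu>]" "v \<in> Fr k x \<nu> \<nu>0"
    "(map last c)[k := v] \<in> gval n V"
  shows "(c, c[k := S @ [v]]) \<in> msem [x]"
proof -
  have "c[k := S @ [v]] \<in> mconf n V"
    using mconf_update_top[OF assms(3,1), of S] gval_update_nth[OF assms(6,1)] assms(4) by auto
  then show ?thesis
    using mstep_ret[OF assms(1,2,4)] assms(3,5) by auto
qed

lemma ssem_call_ret_imp_msem:
  assumes "k < n" "c0 \<in> Cal k" "r \<in> Ret k" "nested_wm n Cal Ret Itn u"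
    and "([map last c], [\<nu>']) \<in> ssem (c0 # u @ [r])" and c: "c \<in> mconf n V"
    and IH: "\<And>c1 \<nu>2. ([map last c1], [\<nu>2]) \<in> ssem u \<Longrightarrow> c1 \<in> mconf n V \<Longrightarrow>
      \<exists>c2. (c1, c2) \<in> msem u \<and> map last c2 = \<nu>2"
  shows "\<exists>c'. (c, c') \<in> msem (c0 # u @ [r]) \<and> map last c' = \<nu>'"
proof -
  let ?\<nu> = "map last c"
  obtain u0 \<nu>2 w where run: "u0 \<in> Fc k c0 (?\<nu> ! k)" "([?\<nu>[k := u0]], [\<nu>2]) \<in> ssem u"
      "w \<in> Fr k r (\<nu>2 ! k) (?\<nu> ! k)" "\<nu>' = \<nu>2[k := w]" "\<nu>' \<in> gval n V"
    using ssem_nested_call_ret_iff[OF assms(1-4)] assms(5) by blast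
  obtain S where S: "c ! k = S @ [?\<nu> ! k]"
    using mconf_top_split[OF c assms(1)] by blast
  define c1 where "c1 = c[k := c ! k @ [u0]]"
  have "?\<nu>[k := u0] \<in> gval n V"
    using ssem_sconf[OF run(2)] by (simp add: sconf_def)
  then have c1: "(c, c1) \<in> mstep c0" "c1 \<in> mconf n V" "map last c1 = ?\<nu>[k := u0]"
    using mstep_callI[OF assms(1,2) c run(1)] unfolding c1_def by (auto simp: map_update)
  then obtain c2 where c2: "(c1, c2) \<in> msem u" "map last c2 = \<nu>2"
    using IH run(2) by metis
  have c2_mconf: "c2 \<in> mconf n V"
    using msem_mconf[OF c2(1)] by blast
  have "map butlast c2 = map butlast c1"
    using msem_nested_imp_ssem[OF assms(4) c2(1)] by blast
  then have "butlast (c2 ! k) = c ! k"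
    using nth_map[of k c2 butlast] nth_map[of k c1 butlast] mconf_length[OF c2_mconf] mconf_length[OF c]
      assms(1)
    unfolding c1_def by simp
  then have "c2 ! k = S @ [?\<nu> ! k, \<nu>2 ! k]"
    using mconf_top_split[OF c2_mconf assms(1)] c2(2) S by simp
  then have "(c2, c2[k := S @ [w]]) \<in> msem [r]"
    using msem_retI[OF assms(1,3) c2_mconf _ run(3)] run(4,5) c2(2) by simp
  then show ?thesis
    using c1(1) c2 run(4) by (auto simp: msem_append map_update intro!: relcompI)
qed

lemma ssem_nested_imp_msem:
  assumes "nested_wm n Cal Ret Itn w" "([map last c], [\<nu>']) \<in> ssem w" "c \<in> mconf n V"
  shows "\<exists>c'. (c, c') \<in> msem w \<and> map last c' = \<nu>'"
  using assms
proof (induction w arbitrary: c \<nu>' rule: nested_wm.induct)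
  case nested_Nil
  then show ?case by auto
next
  case (nested_int k a)
  then obtain v where "v \<in> Fi k a (map last c ! k)" "\<nu>' = (map last c)[k := v]" "\<nu>' \<in> gval n V"
    using ssem_int_iff[OF nested_int(1,2)] by blast
  then show ?case
    using msem_intI[OF nested_int(1,2,4)] by (fastforce simp: map_update)
next
  case (nested_call_ret k c0 r u)
  show ?case
    by (rule ssem_call_ret_imp_msem[OF nested_call_ret(1-4) nested_call_ret.prems nested_call_ret.IH])
next
  case (nested_append u v)
  from nested_append.prems(1) obtain \<nu>1 where "([map last c], [\<nu>1]) \<in> ssem u" "([\<nu>1], [\<nu>']) \<in> ssem v"
    using ssem_nested_strip_frame[OF nested_append(1), of "[]"] by (fastforce simp: ssem_append)
  then obtain c1 c' where "(c, c1) \<in> msem u" "(c1, c') \<in> msem v" "map last c' = \<nu>'"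
    using nested_append.IH nested_append.prems(2) msem_mconf by metis
  then show ?case
    by (auto simp: msem_append)
qed

lemma valid_S_iff_singleton_runs:
  assumes "nested_wm n Cal Ret Itn \<rho>"
  shows "valid_S n Cal Ret Itn V Fc Fr Fi A \<rho> B \<longleftrightarrow> (\<forall>\<nu> \<nu>'. ([\<nu>], [\<nu>']) \<in> ssem \<rho> \<longrightarrow> A \<nu> \<longrightarrow> B \<nu>')"
proof
  assume "\<forall>\<nu> \<nu>'. ([\<nu>], [\<nu>']) \<in> ssem \<rho> \<longrightarrow> A \<nu> \<longrightarrow> B \<nu>'"
  moreover have "([last st], [last st']) \<in> ssem \<rho>" if "(st, st') \<in> ssem \<rho>" for st st'
  proof -
    have "st = butlast st @ [last st]"
      using ssem_sconf[OF that] by (simp add: sconf_def)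
    then show ?thesis
      using ssem_nested_strip_frame[OF assms, of "butlast st" "last st" st'] that by auto
  qed
  ultimately show "valid_S n Cal Ret Itn V Fc Fr Fi A \<rho> B"
    unfolding valid_S_def by blast
qed (force simp: valid_S_def)

lemma valid_M_iff_singleton_runs:
  assumes "nested_wm n Cal Ret Itn \<rho>"
  shows "valid_M n Cal Ret Itn V Fc Fr Fi A \<rho> B \<longleftrightarrow> (\<forall>\<nu> \<nu>'. ([\<nu>], [\<nu>']) \<in> ssem \<rho> \<longrightarrow> A \<nu> \<longrightarrow> B \<nu>')"
proof
  assume valid: "valid_M n Cal Ret Itn V Fc Fr Fi A \<rho> B"
  show "\<forall>\<nu> \<nu>'. ([\<nu>], [\<nu>']) \<in> ssem \<rho> \<longrightarrow> A \<nu> \<longrightarrow> B \<nu>'"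
  proof (intro allI impI)
    fix \<nu> \<nu>'
    assume run: "([\<nu>], [\<nu>']) \<in> ssem \<rho>" and "A \<nu>"
    define c where "c = map (\<lambda>v. [v]) \<nu>"
    have "c \<in> mconf n V" "map last c = \<nu>"
      using ssem_sconf[OF run] unfolding c_def sconf_def gval_def mconf_def by (auto simp: comp_def)
    then obtain c' where "(c, c') \<in> msem \<rho>" "map last c' = \<nu>'"
      using ssem_nested_imp_msem[OF assms] run by metis
    then show "B \<nu>'"
      using valid \<open>A \<nu>\<close> \<open>map last c = \<nu>\<close> unfolding valid_M_def by auto
  qed
qed (auto simp: valid_M_def dest: msem_nested_imp_ssem[OF assms])

end

theorem theorem7p1:
  fixes n :: nat
    and Cal Ret Itn :: "nat \<Rightarrow> 'a set"
    and P :: "nat \<Rightarrow> 'a list set"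
    and V :: "nat \<Rightarrow> 'v set"
    and Fc Fi :: "nat \<Rightarrow> 'a \<Rightarrow> 'v \<Rightarrow> 'v set"
    and Fr :: "nat \<Rightarrow> 'a \<Rightarrow> 'v \<Rightarrow> 'v \<Rightarrow> 'v set"
    and A B :: "'v list \<Rightarrow> bool"
    and \<rho> :: "'a list"
  assumes "vp_alphabets n Cal Ret Itn"
    and "\<forall>k<n. P k \<subseteq> lists (Sig Cal Ret Itn k) \<and> wm_vpl (Cal k) (Ret k) (Itn k) (P k)"
    and "sem_ok n Cal Ret Itn V Fc Fr Fi"
    and "\<rho> \<in> bowtie n Cal Ret Itn P"
  shows "valid_M n Cal Ret Itn V Fc Fr Fi A \<rho> B \<longleftrightarrow> valid_S n Cal Ret Itn V Fc Fr Fi A \<rho> B"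
proof -
  interpret vp_semantics n Cal Ret Itn V Fc Fi Fr
    using assms(1) by unfold_locales
  have "nested_wm n Cal Ret Itn \<rho>"
    using bowtie_nested_wm assms(2,4) unfolding wm_vpl_def by blast
  then show ?thesis
    using valid_M_iff_singleton_runs valid_S_iff_singleton_runs by simp
qed

end
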